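(* Consider a heterogeneous graph whose nodes are the rows of $K$ tables $\mathbf{T}^1,\dots,\mathbf{T}^K$ (node type $=$ table), with edges given by primary-key/foreign-key relations, and let $H\ge 1$. Fix a table $k$ and a column $j$ of $\mathbf{T}^k$, and initialize scalar node embeddings by $\mu^{(0)}_v = t^k_{i'j}$ if $v$ is row $i'$ of table $k$, and $\mu^{(0)}_v=0$ if $v$ is a row of any table $k'\neq k$. Fix a length-$H$ meta-path $\rho_H$ that traverses each table at most once, and for $h=0,\dots,H-1$ update $$\mu_v^{(h+1)} = \sigma\Big(w_0^{(h)}\mu_v^{(h)} + \operatorname{agg}\big[\{w^{(h)}\mu_u^{(h)}\}_{u\in\mathcal{N}_v^{(h)}}\big]\Big),$$ where $\mathcal{N}_v^{(h)}$ is the set of neighbors of $v$ along the (single) edge type of step $h$ of $\rho_H$, $\operatorname{agg}$ is a permutation-invariant aggregation function and $\sigma:\mathbb{R}\to\mathbb{R}$ is an activation. If $\sigma$ and $\operatorname{agg}$ are positively homogeneous functions and $w_0^{(h)}, w^{(h)}\in\mathbb{R}_+$ for all $h$, then without loss of generality this update scheme can be reparameterized with no internal weights (i.e., the weights can be pulled out of the composition so that the output embeddings equal a nonnegative overall scale factor times the embeddings produced by the same scheme with all weights $w_0^{(h)}, w^{(h)}$ set to $1$).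
   Context: A meta-path of length $H$ is a sequence of $H$ edge types (PK–FK relations) connecting properly typed nodes. A function $f$ is positively homogeneous if $f(c\,x)=c\,f(x)$ for all $c\ge 0$ (for $\operatorname{agg}$, applied to the multiset of scaled inputs). A node with no neighbors at step $h$ has $\mathcal{N}_v^{(h)}=\emptyset$, in which case the aggregation term is absent. *)

theory Defs
  imports Complex_Main "HOL-Library.Multiset"
begin

text \<open>Heterogeneous relational graph: nodes of type 'v (finite), each node is a row
  (row v) of a table (tbl v). Edge types 'e, each with a source table and a destination
  table; E e u v means that u is a neighbour of v along edge type e (u in table src e,
  v in table dst e).\<close>

definition pos_hom :: "(real \<Rightarrow> real) \<Rightarrow> bool" where
  "pos_hom f \<longleftrightarrow> (\<forall>c x. c \<ge> 0 \<longrightarrow> f (c * x) = c * f x)"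

definition pos_hom_agg :: "(real multiset \<Rightarrow> real) \<Rightarrow> bool" where
  "pos_hom_agg g \<longleftrightarrow> (\<forall>c M. c \<ge> 0 \<longrightarrow> g (image_mset (\<lambda>x. c * x) M) = c * g M)"

definition nbrs :: "('e \<Rightarrow> 'v \<Rightarrow> 'v \<Rightarrow> bool) \<Rightarrow> 'e list \<Rightarrow> nat \<Rightarrow> 'v \<Rightarrow> 'v set" where
  "nbrs E \<rho> h v = {u. E (\<rho> ! h) u v}"

definition path_tbl :: "('e \<Rightarrow> nat) \<Rightarrow> ('e \<Rightarrow> nat) \<Rightarrow> 'e list \<Rightarrow> nat \<Rightarrow> nat" where
  "path_tbl src dst \<rho> h = (if h = 0 then src (\<rho> ! 0) else dst (\<rho> ! (h - 1)))"

text \<open>The aggregation term is absent when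
  the neighbourhood is empty. agg acts on the multiset of scaled neighbour embeddings
  (hence is permutation invariant).\<close>
fun emb :: "(real \<Rightarrow> real) \<Rightarrow> (real multiset \<Rightarrow> real) \<Rightarrow> ('e \<Rightarrow> 'v \<Rightarrow> 'v \<Rightarrow> bool)
    \<Rightarrow> 'e list \<Rightarrow> (nat \<Rightarrow> real) \<Rightarrow> (nat \<Rightarrow> real) \<Rightarrow> ('v \<Rightarrow> real) \<Rightarrow> nat \<Rightarrow> 'v \<Rightarrow> real" where
  "emb \<sigma> agg E \<rho> w0 w \<mu>0 0 = \<mu>0"
| "emb \<sigma> agg E \<rho> w0 w \<mu>0 (Suc h) = (\<lambda>v.
     (if nbrs E \<rho> h v = {}
      then \<sigma> (w0 h * emb \<sigma> agg E \<rho> w0 w \<mu>0 h v)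
      else \<sigma> (w0 h * emb \<sigma> agg E \<rho> w0 w \<mu>0 h v
               + agg (image_mset (\<lambda>u. w h * emb \<sigma> agg E \<rho> w0 w \<mu>0 h u)
                                 (mset_set (nbrs E \<rho> h v))))))"

end

theory Submission
  imports Defs
begin

text \<open>Along the meta-path the unit-weight embedding is supported on the tables reached
  from table \<open>k\<close> so far. Since the path visits every table at most once, at each step
  either the source or the destination table of the current edge type carries only zero
  embeddings, so each updated embedding is positively homogeneous in a single incoming
  term. Induction on the step then shows that, table by table, the weighted embedding is
  a nonnegative multiple of the unit-weight one.\<close>

lemma pos_homD: "pos_hom f \<Longrightarrow> c \<ge> 0 \<Longrightarrow> f (c * x) = c * f x"
  unfolding pos_hom_def by blast

lemma pos_hom_zero: "pos_hom f \<Longrightarrow> f 0 = 0"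
  using pos_homD[of f 0 0] by simp

lemma pos_hom_agg_image_mset:
  assumes "pos_hom_agg g" "c \<ge> 0"
  shows "g (image_mset (\<lambda>u. c * f u) M) = c * g (image_mset f M)"
proof -
  have "image_mset (\<lambda>u. c * f u) M = image_mset (\<lambda>x. c * x) (image_mset f M)"
    by (simp add: multiset.map_comp o_def)
  then show ?thesis
    using assms unfolding pos_hom_agg_def by simp
qed

lemma pos_hom_agg_zero:
  assumes "pos_hom_agg g" "\<And>u. u \<in># M \<Longrightarrow> f u = 0"
  shows "g (image_mset f M) = 0"
proof -
  have "image_mset f M = image_mset (\<lambda>u. 0 * f u) M"
    using assms(2) by (intro image_mset_cong) simp
  then show ?thesis
    using pos_hom_agg_image_mset[OF assms(1), of 0 f M] by simp
qed

lemma mem_mset_setD: "x \<in># mset_set A \<Longrightarrow> x \<in> A"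
  by (cases "finite A") auto

lemma emb_Suc_eq_zero:
  assumes "pos_hom \<sigma>" "pos_hom_agg agg"
    and "emb \<sigma> agg E \<rho> w0 w \<mu>0 h v = 0"
    and "\<And>u. u \<in> nbrs E \<rho> h v \<Longrightarrow> emb \<sigma> agg E \<rho> w0 w \<mu>0 h u = 0"
  shows "emb \<sigma> agg E \<rho> w0 w \<mu>0 (Suc h) v = 0"
proof -
  have "agg (image_mset (\<lambda>u. w h * emb \<sigma> agg E \<rho> w0 w \<mu>0 h u) (mset_set (nbrs E \<rho> h v))) = 0"
    by (rule pos_hom_agg_zero[OF assms(2)]) (simp add: assms(4) mem_mset_setD)
  then show ?thesis
    using assms(3) pos_hom_zero[OF assms(1)] by simp
qed

lemma emb_Suc_scaled:
  assumes \<sigma>: "pos_hom \<sigma>" and agg: "pos_hom_agg agg" and "c \<ge> 0"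
    and self: "w0 h * emb \<sigma> agg E \<rho> w0 w \<mu>0 h v
             = c * emb \<sigma> agg E \<rho> (\<lambda>_. 1) (\<lambda>_. 1) \<mu>0 h v"
    and nbr: "\<And>u. u \<in> nbrs E \<rho> h v \<Longrightarrow> w h * emb \<sigma> agg E \<rho> w0 w \<mu>0 h u
             = c * emb \<sigma> agg E \<rho> (\<lambda>_. 1) (\<lambda>_. 1) \<mu>0 h u"
  shows "emb \<sigma> agg E \<rho> w0 w \<mu>0 (Suc h) v
       = c * emb \<sigma> agg E \<rho> (\<lambda>_. 1) (\<lambda>_. 1) \<mu>0 (Suc h) v"
proof -
  let ?e1 = "emb \<sigma> agg E \<rho> (\<lambda>_. 1) (\<lambda>_. 1) \<mu>0 h"
  let ?N = "mset_set (nbrs E \<rho> h v)"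
  have "image_mset (\<lambda>u. w h * emb \<sigma> agg E \<rho> w0 w \<mu>0 h u) ?N = image_mset (\<lambda>u. c * ?e1 u) ?N"
    using nbr by (intro image_mset_cong) (simp add: mem_mset_setD)
  then have "agg (image_mset (\<lambda>u. w h * emb \<sigma> agg E \<rho> w0 w \<mu>0 h u) ?N)
           = c * agg (image_mset ?e1 ?N)"
    using pos_hom_agg_image_mset[OF agg \<open>c \<ge> 0\<close>] by simp
  then show ?thesis
    using self pos_homD[OF \<sigma> \<open>c \<ge> 0\<close>] by (simp flip: distrib_left)
qed

definition table_scaled :: "('v \<Rightarrow> 't) \<Rightarrow> ('v \<Rightarrow> real) \<Rightarrow> ('v \<Rightarrow> real) \<Rightarrow> bool" where
  "table_scaled tbl f g \<longleftrightarrow> (\<forall>t. \<exists>c \<ge> 0. \<forall>v. tbl v = t \<longrightarrow> f v = c * g v)"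

lemma table_scaled_refl: "table_scaled tbl f f"
  unfolding table_scaled_def by (metis mult_1 zero_le_one)

lemma emb_Suc_table_scaled:
  assumes \<sigma>: "pos_hom \<sigma>" and agg: "pos_hom_agg agg" and "w0 h \<ge> 0" "w h \<ge> 0"
    and typed: "\<And>u v. u \<in> nbrs E \<rho> h v \<Longrightarrow> tbl u = s \<and> tbl v = d"
    and scaled: "table_scaled tbl (emb \<sigma> agg E \<rho> w0 w \<mu>0 h)
                                  (emb \<sigma> agg E \<rho> (\<lambda>_. 1) (\<lambda>_. 1) \<mu>0 h)"
    and one_side_zero: "(\<forall>v. tbl v = d \<longrightarrow> emb \<sigma> agg E \<rho> (\<lambda>_. 1) (\<lambda>_. 1) \<mu>0 h v = 0)
                      \<or> (\<forall>u. tbl u = s \<longrightarrow> emb \<sigma> agg E \<rho> (\<lambda>_. 1) (\<lambda>_. 1) \<mu>0 h u = 0)"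
  shows "table_scaled tbl (emb \<sigma> agg E \<rho> w0 w \<mu>0 (Suc h))
                          (emb \<sigma> agg E \<rho> (\<lambda>_. 1) (\<lambda>_. 1) \<mu>0 (Suc h))"
proof -
  let ?ew = "emb \<sigma> agg E \<rho> w0 w \<mu>0"
  let ?e1 = "emb \<sigma> agg E \<rho> (\<lambda>_. 1) (\<lambda>_. 1) \<mu>0"
  obtain c where c_nonneg: "\<And>t. c t \<ge> 0" and c: "\<And>v. ?ew h v = c (tbl v) * ?e1 h v"
    using scaled unfolding table_scaled_def by metis
  have table_step: "\<exists>c' \<ge> 0. \<forall>v. tbl v = t \<longrightarrow> ?ew (Suc h) v = c' * ?e1 (Suc h) v"
    if "a \<ge> 0" and "\<And>v. tbl v = t \<Longrightarrow> w0 h * ?ew h v = a * ?e1 h v"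
      and "\<And>u v. tbl v = t \<Longrightarrow> u \<in> nbrs E \<rho> h v \<Longrightarrow> w h * ?ew h u = a * ?e1 h u" for t a
  proof (intro exI[of _ a] conjI allI impI)
    fix v
    assume "tbl v = t"
    then show "?ew (Suc h) v = a * ?e1 (Suc h) v"
      using that by (intro emb_Suc_scaled[OF \<sigma> agg]) auto
  qed (rule \<open>a \<ge> 0\<close>)
  have "\<exists>c' \<ge> 0. \<forall>v. tbl v = t \<longrightarrow> ?ew (Suc h) v = c' * ?e1 (Suc h) v" for t
  proof (cases "t = d")
    case False
    then show ?thesis
      using typed c c_nonneg \<open>w0 h \<ge> 0\<close> by (intro table_step[of "w0 h * c t"]) auto
  next
    case True
    from one_side_zero show ?thesis
    proof
      assume "\<forall>v. tbl v = d \<longrightarrow> ?e1 h v = 0"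
      then show ?thesis
        using True typed c c_nonneg \<open>w h \<ge> 0\<close> by (intro table_step[of "w h * c s"]) auto
    next
      assume "\<forall>u. tbl u = s \<longrightarrow> ?e1 h u = 0"
      then show ?thesis
        using typed c c_nonneg \<open>w0 h \<ge> 0\<close> by (intro table_step[of "w0 h * c t"]) auto
    qed
  qed
  then show ?thesis
    unfolding table_scaled_def by blast
qed

fun reached_tables :: "(nat \<Rightarrow> 't) \<Rightarrow> 't \<Rightarrow> nat \<Rightarrow> 't set" where
  "reached_tables p k 0 = {k}"
| "reached_tables p k (Suc h) =
     (if p h \<in> reached_tables p k h then insert (p (Suc h)) (reached_tables p k h)
      else reached_tables p k h)"

lemma reached_tables_subset: "reached_tables p k h \<subseteq> insert k (p ` {1..h})"
  by (induction h) (auto simp: atLeastAtMostSuc_conv)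

lemma reached_tables_singleton_or_visited:
  "reached_tables p k h = {k} \<or> k \<in> p ` {..<h}"
proof (induction h)
  case (Suc h)
  show ?case
  proof (cases "p h \<in> reached_tables p k h")
    case True
    with Suc.IH have "k \<in> p ` {..<Suc h}"
      by (auto simp: lessThan_Suc)
    then show ?thesis
      by blast
  next
    case False
    with Suc.IH show ?thesis
      by (auto simp: lessThan_Suc)
  qed
qed simp

lemma reached_tables_not_both:
  assumes "inj_on p {0..Suc h}"
  shows "\<not> (p h \<in> reached_tables p k h \<and> p (Suc h) \<in> reached_tables p k h)"
proof
  assume reached: "p h \<in> reached_tables p k h \<and> p (Suc h) \<in> reached_tables p k h"
  have not_earlier: "p (Suc h) \<notin> p ` {..h}"
  proof
    assume "p (Suc h) \<in> p ` {..h}"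
    then obtain i where "i \<le> h" "p (Suc h) = p i"
      by auto
    then show False
      using inj_onD[OF assms, of "Suc h" i] by simp
  qed
  then have "p (Suc h) = k"
    using reached reached_tables_subset[of p k h] by fastforce
  moreover have "k \<in> p ` {..h}"
  proof (cases "reached_tables p k h = {k}")
    case True
    then show ?thesis
      using reached by auto
  next
    case False
    then show ?thesis
      using reached_tables_singleton_or_visited[of p k h] by auto
  qed
  ultimately show False
    using not_earlier by simp
qed

lemma emb_vanishes_outside_reached_tables:
  assumes \<sigma>: "pos_hom \<sigma>" and agg: "pos_hom_agg agg"
    and typed: "\<And>h u v. h < H \<Longrightarrow> u \<in> nbrs E \<rho> h v \<Longrightarrow> tbl u = p h \<and> tbl v = p (Suc h)"
    and init: "\<And>v. tbl v \<noteq> k \<Longrightarrow> \<mu>0 v = 0"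
  shows "h \<le> H \<Longrightarrow> tbl v \<notin> reached_tables p k h \<Longrightarrow> emb \<sigma> agg E \<rho> w0 w \<mu>0 h v = 0"
proof (induction h arbitrary: v)
  case 0
  then show ?case
    using init by simp
next
  case (Suc h)
  show ?case
  proof (rule emb_Suc_eq_zero[OF \<sigma> agg])
    show "emb \<sigma> agg E \<rho> w0 w \<mu>0 h v = 0"
      using Suc by (auto split: if_splits)
    show "emb \<sigma> agg E \<rho> w0 w \<mu>0 h u = 0" if "u \<in> nbrs E \<rho> h v" for u
      using Suc typed[OF _ that] by (auto split: if_splits)
  qed
qed

lemma emb_table_scaled:
  assumes \<sigma>: "pos_hom \<sigma>" and agg: "pos_hom_agg agg"
    and w0_nonneg: "\<And>h. h < H \<Longrightarrow> w0 h \<ge> 0" and w_nonneg: "\<And>h. h < H \<Longrightarrow> w h \<ge> 0"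
    and typed: "\<And>h u v. h < H \<Longrightarrow> u \<in> nbrs E \<rho> h v \<Longrightarrow> tbl u = p h \<and> tbl v = p (Suc h)"
    and once: "inj_on p {0..H}"
    and init: "\<And>v. tbl v \<noteq> k \<Longrightarrow> \<mu>0 v = 0"
  shows "h \<le> H \<Longrightarrow> table_scaled tbl (emb \<sigma> agg E \<rho> w0 w \<mu>0 h)
                                       (emb \<sigma> agg E \<rho> (\<lambda>_. 1) (\<lambda>_. 1) \<mu>0 h)"
proof (induction h)
  case 0
  then show ?case
    by (simp add: table_scaled_refl)
next
  case (Suc h)
  then have "h < H" and scaled: "table_scaled tbl (emb \<sigma> agg E \<rho> w0 w \<mu>0 h)
                                                 (emb \<sigma> agg E \<rho> (\<lambda>_. 1) (\<lambda>_. 1) \<mu>0 h)"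
    by simp_all
  have vanishes: "emb \<sigma> agg E \<rho> (\<lambda>_. 1) (\<lambda>_. 1) \<mu>0 h v = 0" if "tbl v \<notin> reached_tables p k h" for v
    using \<open>h < H\<close> that
    by (intro emb_vanishes_outside_reached_tables[where E = E and \<rho> = \<rho> and H = H and tbl = tbl
          and p = p and k = k, OF \<sigma> agg typed init]) simp_all
  have "\<not> (p h \<in> reached_tables p k h \<and> p (Suc h) \<in> reached_tables p k h)"
    using Suc.prems by (intro reached_tables_not_both) (auto intro: inj_on_subset[OF once])
  then have "(\<forall>v. tbl v = p (Suc h) \<longrightarrow> emb \<sigma> agg E \<rho> (\<lambda>_. 1) (\<lambda>_. 1) \<mu>0 h v = 0)
           \<or> (\<forall>u. tbl u = p h \<longrightarrow> emb \<sigma> agg E \<rho> (\<lambda>_. 1) (\<lambda>_. 1) \<mu>0 h u = 0)"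
    using vanishes by metis
  then show ?case
    using \<open>h < H\<close>
    by (intro emb_Suc_table_scaled[OF \<sigma> agg _ _ _ scaled]) (simp_all add: w0_nonneg w_nonneg typed)
qed

lemma nbrs_path_tbl:
  assumes edges_typed: "\<forall>e u v. E e u v \<longrightarrow> tbl u = src e \<and> tbl v = dst e"
    and path_typed: "\<forall>h. h + 1 < H \<longrightarrow> dst (\<rho> ! h) = src (\<rho> ! (h + 1))"
    and "h < H" "u \<in> nbrs E \<rho> h v"
  shows "tbl u = path_tbl src dst \<rho> h \<and> tbl v = path_tbl src dst \<rho> (Suc h)"
proof -
  have "src (\<rho> ! h) = path_tbl src dst \<rho> h"
    using path_typed \<open>h < H\<close> by (cases h) (auto simp: path_tbl_def)
  then show ?thesis
    using edges_typed \<open>u \<in> nbrs E \<rho> h v\<close> by (auto simp: nbrs_def path_tbl_def)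
qed

theorem proposition3p2:
  fixes tbl row :: "'v::finite \<Rightarrow> nat"
    and T :: "nat \<Rightarrow> nat \<Rightarrow> nat \<Rightarrow> real"
    and K k j H :: nat
    and src dst :: "'e \<Rightarrow> nat"
    and E :: "'e \<Rightarrow> 'v \<Rightarrow> 'v \<Rightarrow> bool"
    and \<rho> :: "'e list"
    and \<sigma> :: "real \<Rightarrow> real"
    and agg :: "real multiset \<Rightarrow> real"
    and w0 w :: "nat \<Rightarrow> real"
  assumes nodes_tables: "\<forall>v. tbl v < K"
    and nodes_rows: "inj (\<lambda>v. (tbl v, row v))"
    and edges_typed: "\<forall>e u v. E e u v \<longrightarrow> tbl u = src e \<and> tbl v = dst e"
    and H_pos: "H \<ge> 1"
    and k_lt: "k < K"
    and path_len: "length \<rho> = H"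
    and path_typed: "\<forall>h. h + 1 < H \<longrightarrow> dst (\<rho> ! h) = src (\<rho> ! (h + 1))"
    and path_once: "inj_on (path_tbl src dst \<rho>) {0..H}"
    and sigma_hom: "pos_hom \<sigma>"
    and agg_hom: "pos_hom_agg agg"
    and w0_nonneg: "\<forall>h < H. w0 h \<ge> 0"
    and w_nonneg: "\<forall>h < H. w h \<ge> 0"
  shows "\<forall>t. \<exists>c \<ge> 0. \<forall>v. tbl v = t \<longrightarrow>
           emb \<sigma> agg E \<rho> w0 w (\<lambda>v. if tbl v = k then T k (row v) j else 0) H v
         = c * emb \<sigma> agg E \<rho> (\<lambda>_. 1) (\<lambda>_. 1) (\<lambda>v. if tbl v = k then T k (row v) j else 0) H v"
proof -
  let ?\<mu>0 = "\<lambda>v. if tbl v = k then T k (row v) j else 0"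
  have "table_scaled tbl (emb \<sigma> agg E \<rho> w0 w ?\<mu>0 H) (emb \<sigma> agg E \<rho> (\<lambda>_. 1) (\<lambda>_. 1) ?\<mu>0 H)"
  proof (rule emb_table_scaled[where p = "path_tbl src dst \<rho>" and k = k])
    show "\<And>h u v. h < H \<Longrightarrow> u \<in> nbrs E \<rho> h v
            \<Longrightarrow> tbl u = path_tbl src dst \<rho> h \<and> tbl v = path_tbl src dst \<rho> (Suc h)"
      by (rule nbrs_path_tbl[OF edges_typed path_typed])
  qed (use sigma_hom agg_hom w0_nonneg w_nonneg path_once in auto)
  then show ?thesis
    unfolding table_scaled_def .
qed

end
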